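(* Let $f:\mathbb{R}^n\to\mathbb{R}^n$ be a single-valued mapping which is continuously differentiable around a point $\bar x\in\mathbb{R}^n$, and let $\varepsilon>0$. Suppose there is $\delta>0$ such that for each $x\in B[\bar x,\delta]$ we have $$\|f(x)-f(\bar x)-\nabla f(x)(x-\bar x)\|\le \varepsilon\|x-\bar x\|.$$ Then for each $x\in B[\bar x,\delta]$ and each $(y^*,x^* )\in \operatorname{gph} D^*f(x,f(x))$ we have $$\big|\langle x^*,x-\bar x\rangle-\langle y^*,f(x)-f(\bar x)\rangle\big|\le \varepsilon\,\|(x^*,y^* )\|\,\|(x,f(x))-(\bar x,f(\bar x))\|.$$
   Context: $B[z,r]$ denotes the closed ball of radius $r$ centered at $z$. On $\mathbb{R}^n$ the Euclidean norm is used; on a product of Euclidean spaces the norm is $\|(a,b)\|:=\max\{\|a\|,\|b\|\}$. $\nabla f(x)$ is the Jacobian of $f$ at $x$. For a set-valued map $F:\mathbb{R}^n\rightrightarrows\mathbb{R}^m$ and $(x,y)\in\operatorname{gph}F$, the limiting (Mordukhovich) coderivative $D^*F(x,y):\mathbb{R}^m\rightrightarrows\mathbb{R}^n$ is defined by $\operatorname{gph}D^*F(x,y)=\{(y^*,x^* ):(x^*,-y^* )\in N_{\operatorname{gph}F}(x,y)\}$, where $N$ denotes the limiting normal cone; a single-valued $f$ is identified with the map $x\mapsto\{f(x)\}$. *)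

theory Defs
  imports "HOL-Analysis.Analysis"
begin

definition frechet_normal_cone :: "'a::real_inner set \<Rightarrow> 'a \<Rightarrow> 'a set" where
  "frechet_normal_cone S z =
     (if z \<in> S then {v. \<forall>e>0. \<exists>d>0. \<forall>z'\<in>S. norm (z' - z) < d \<longrightarrow>
                                      inner v (z' - z) \<le> e * norm (z' - z)}
      else {})"

definition limiting_normal_cone :: "'a::real_inner set \<Rightarrow> 'a \<Rightarrow> 'a set" where
  "limiting_normal_cone S z =
     (if z \<in> S then {v. \<exists>zs vs. (\<forall>k. zs k \<in> S \<and> vs k \<in> frechet_normal_cone S (zs k))
                             \<and> zs \<longlonglongrightarrow> z \<and> vs \<longlonglongrightarrow> v}
      else {})"

definition fgraph :: "('a \<Rightarrow> 'b) \<Rightarrow> ('a \<times> 'b) set" where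
  "fgraph f = {(x, f x) | x. True}"

definition coderiv_graph :: "('a::real_inner \<Rightarrow> 'b::real_inner) \<Rightarrow> 'a \<Rightarrow> ('b \<times> 'a) set" where
  "coderiv_graph f x = {(ys, xs). (xs, - ys) \<in> limiting_normal_cone (fgraph f) (x, f x)}"

definition pnorm :: "('a::real_normed_vector \<times> 'b::real_normed_vector) \<Rightarrow> real" where
  "pnorm p = max (norm (fst p)) (norm (snd p))"

end

theory Submission
  imports Defs
begin

text \<open>For a map \<open>f\<close> that is continuously differentiable around \<open>x\<close>, the limiting coderivative
  is the adjoint of the Jacobian: regular normals \<open>(u, w)\<close> to the graph at \<open>(z, f z)\<close> annihilate
  every tangent vector \<open>(h, \<nabla>f(z) h)\<close>, and this identity survives the limit defining limiting
  normals because \<open>\<nabla>f\<close> is continuous. Thus \<open>\<langle>x\<^sup>*, x - xbar\<rangle> = \<langle>y\<^sup>*, \<nabla>f(x)(x - xbar)\<rangle>\<close>, and the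
  left-hand side of the estimate equals \<open>|\<langle>y\<^sup>*, f x - f xbar - \<nabla>f(x)(x - xbar)\<rangle>|\<close>, which the
  hypothesis and Cauchy-Schwarz bound.\<close>

lemma has_vector_derivative_imp_difference_quotient_tendsto:
  assumes "(p has_vector_derivative D) (at x within S)"
  shows "((\<lambda>t. (p t - p x) /\<^sub>R (t - x)) \<longlongrightarrow> D) (at x within S)"
proof -
  have "((\<lambda>t. (p t - p x - (t - x) *\<^sub>R D) /\<^sub>R norm (t - x)) \<longlongrightarrow> 0) (at x within S)"
    using assms by (simp add: has_vector_derivative_def has_derivative_at_within)
  then have "((\<lambda>t. norm ((p t - p x - (t - x) *\<^sub>R D) /\<^sub>R norm (t - x))) \<longlongrightarrow> 0) (at x within S)"
    by (simp only: tendsto_norm_zero_iff)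
  then have "((\<lambda>t. norm ((p t - p x) /\<^sub>R (t - x) - D)) \<longlongrightarrow> 0) (at x within S)"
  proof (rule Lim_transform_eventually)
    show "\<forall>\<^sub>F t in at x within S. norm ((p t - p x - (t - x) *\<^sub>R D) /\<^sub>R norm (t - x))
                                = norm ((p t - p x) /\<^sub>R (t - x) - D)"
      unfolding eventually_at_filter
    proof (intro always_eventually allI impI)
      fix t
      assume "t \<noteq> x"
      then have "(p t - p x) /\<^sub>R (t - x) - D = (p t - p x - (t - x) *\<^sub>R D) /\<^sub>R (t - x)"
        by (simp add: scaleR_diff_right)
      then show "norm ((p t - p x - (t - x) *\<^sub>R D) /\<^sub>R norm (t - x))
          = norm ((p t - p x) /\<^sub>R (t - x) - D)"
        by simp
    qed
  qed
  then show ?thesis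
    by (simp only: tendsto_norm_zero_iff LIM_zero_iff)
qed

lemma frechet_normal_cone_inner_tangent_le:
  fixes p :: "real \<Rightarrow> 'a::real_inner"
  assumes v: "v \<in> frechet_normal_cone S (p 0)"
    and p_S: "\<And>t. t > 0 \<Longrightarrow> p t \<in> S"
    and D: "(p has_vector_derivative D) (at_right 0)"
  shows "inner v D \<le> 0"
proof -
  have quotient: "((\<lambda>t. (p t - p 0) /\<^sub>R t) \<longlongrightarrow> D) (at_right 0)"
    using has_vector_derivative_imp_difference_quotient_tendsto[OF D] by simp
  have "(p \<longlongrightarrow> p 0) (at_right 0)"
    using has_vector_derivative_continuous[OF D] by (simp add: continuous_within)
  then have p_near: "((\<lambda>t. p t - p 0) \<longlongrightarrow> 0) (at_right 0)"
    by (rule Lim_null[THEN iffD1])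
  have approx: "inner v D \<le> e * norm D" if "e > 0" for e
  proof -
    have "p 0 \<in> S"
      using v by (auto simp: frechet_normal_cone_def split: if_splits)
    with v \<open>e > 0\<close> obtain d where "d > 0" and d: "\<And>z. z \<in> S \<Longrightarrow> norm (z - p 0) < d \<Longrightarrow>
        inner v (z - p 0) \<le> e * norm (z - p 0)"
      unfolding frechet_normal_cone_def by auto
    have "\<forall>\<^sub>F t in at_right 0. norm (p t - p 0) < d"
      using p_near \<open>d > 0\<close> by (auto simp: tendsto_iff dist_norm)
    then have "\<forall>\<^sub>F t in at_right 0. inner v ((p t - p 0) /\<^sub>R t) \<le> e * norm ((p t - p 0) /\<^sub>R t)"
      using eventually_at_right_less[of 0]
    proof eventually_elim
      case (elim t)
      then have "inner v (p t - p 0) \<le> e * norm (p t - p 0)"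
        using d p_S by blast
      with elim show ?case
        by (simp add: divide_right_mono)
    qed
    then show ?thesis
      by (intro tendsto_le[OF _ tendsto_mult[OF tendsto_const tendsto_norm[OF quotient]]
            tendsto_inner[OF tendsto_const quotient]]) simp
  qed
  show ?thesis
  proof (rule field_le_epsilon)
    fix e :: real
    assume "e > 0"
    then have "inner v D \<le> e / (norm D + 1) * norm D"
      by (intro approx) (simp add: add_nonneg_pos)
    also have "\<dots> \<le> e"
      using \<open>e > 0\<close> by (simp add: pos_divide_le_eq add_nonneg_pos)
    finally show "inner v D \<le> 0 + e"
      by simp
  qed
qed

lemma frechet_normal_graph_annihilates_derivative:
  fixes f :: "'a::real_inner \<Rightarrow> 'b::real_inner"
  assumes f: "(f has_derivative L) (at z)"
    and v: "v \<in> frechet_normal_cone (fgraph f) (z, f z)"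
  shows "inner (fst v) h + inner (snd v) (L h) = 0"
proof -
  have le: "inner (fst v) k + inner (snd v) (L k) \<le> 0" for k
  proof -
    define p where "p t = (z + t *\<^sub>R k, f (z + t *\<^sub>R k))" for t :: real
    have line: "((\<lambda>t. z + t *\<^sub>R k) has_vector_derivative k) (at 0)"
      by (auto intro!: derivative_eq_intros)
    have "(f has_derivative L) (at ((\<lambda>t. z + t *\<^sub>R k) 0) within range (\<lambda>t. z + t *\<^sub>R k))"
      using f by (simp add: has_derivative_at_withinI)
    from vector_derivative_diff_chain_within[OF line this]
    have "((\<lambda>t. f (z + t *\<^sub>R k)) has_vector_derivative L k) (at 0)"
      by (simp add: o_def)
    with line have "(p has_vector_derivative (k, L k)) (at 0)"
      unfolding p_def by (rule has_vector_derivative_Pair)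
    moreover have "p t \<in> fgraph f" for t
      by (auto simp: p_def fgraph_def)
    ultimately have "inner v (k, L k) \<le> 0"
      using v by (intro frechet_normal_cone_inner_tangent_le[of v "fgraph f" p])
        (auto simp: p_def has_vector_derivative_at_within)
    then show ?thesis
      by (cases v) simp
  qed
  have "L (- h) = - L h"
    using f by (simp add: has_derivative_linear linear_neg)
  then show ?thesis
    using le[of h] le[of "- h"] by simp
qed

lemma limiting_normal_graph_annihilates_derivative:
  fixes f :: "'a::real_inner \<Rightarrow> 'b::real_inner" and f' :: "'a \<Rightarrow> 'a \<Rightarrow>\<^sub>L 'b"
  assumes "open U" and "x \<in> U"
    and deriv: "\<And>z. z \<in> U \<Longrightarrow> (f has_derivative blinfun_apply (f' z)) (at z)"
    and cont: "continuous_on U f'"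
    and uw: "(u, w) \<in> limiting_normal_cone (fgraph f) (x, f x)"
  shows "inner u h + inner w (f' x h) = 0"
proof -
  obtain zs vs where zs: "\<And>k. zs k \<in> fgraph f"
    and vs: "\<And>k. vs k \<in> frechet_normal_cone (fgraph f) (zs k)"
    and zs_lim: "zs \<longlonglongrightarrow> (x, f x)" and vs_lim: "vs \<longlonglongrightarrow> (u, w)"
    using uw by (auto simp: limiting_normal_cone_def fgraph_def)
  define a where "a k = fst (zs k)" for k
  have zs_eq: "zs k = (a k, f (a k))" for k
    using zs[of k] by (auto simp: a_def fgraph_def)
  have a_lim: "a \<longlonglongrightarrow> x"
    using tendsto_fst[OF zs_lim] by (simp add: a_def[abs_def])
  have "\<forall>\<^sub>F k in sequentially. a k \<in> U"
    using a_lim \<open>open U\<close> \<open>x \<in> U\<close> by (rule topological_tendstoD)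
  then have "\<forall>\<^sub>F k in sequentially. inner (fst (vs k)) h + inner (snd (vs k)) (f' (a k) h) = 0"
    by eventually_elim
      (use deriv vs zs_eq in \<open>metis frechet_normal_graph_annihilates_derivative\<close>)
  then have "(\<lambda>k. inner (fst (vs k)) h + inner (snd (vs k)) (f' (a k) h)) \<longlonglongrightarrow> 0"
    by (simp add: tendsto_eventually)
  moreover have "(\<lambda>k. f' (a k)) \<longlonglongrightarrow> f' x"
    using cont \<open>open U\<close> \<open>x \<in> U\<close> a_lim
    by (metis continuous_on_eq_continuous_at isCont_tendsto_compose)
  then have "(\<lambda>k. inner (fst (vs k)) h + inner (snd (vs k)) (f' (a k) h))
      \<longlonglongrightarrow> inner u h + inner w (f' x h)"
    using tendsto_fst[OF vs_lim] tendsto_snd[OF vs_lim]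
    by (auto intro!: tendsto_intros blinfun.tendsto)
  ultimately show ?thesis
    using LIMSEQ_unique by fastforce
qed

theorem lemma3p3:
  fixes f :: "'a::euclidean_space \<Rightarrow> 'a"
    and f' :: "'a \<Rightarrow> 'a \<Rightarrow>\<^sub>L 'a"
    and U :: "'a set" and xbar :: 'a and \<epsilon> \<delta> :: real
  assumes U_open: "open U" and xbar_U: "xbar \<in> U"
    and deriv: "\<And>x. x \<in> U \<Longrightarrow> (f has_derivative blinfun_apply (f' x)) (at x)"
    and cont: "continuous_on U f'"
    and eps: "\<epsilon> > 0"
    and delta: "\<delta> > 0" and ball_U: "cball xbar \<delta> \<subseteq> U"
    and est: "\<And>x. x \<in> cball xbar \<delta> \<Longrightarrow>
               norm (f x - f xbar - f' x (x - xbar)) \<le> \<epsilon> * norm (x - xbar)"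
  shows "\<forall>x \<in> cball xbar \<delta>. \<forall>(ys, xs) \<in> coderiv_graph f x.
           \<bar>inner xs (x - xbar) - inner ys (f x - f xbar)\<bar>
             \<le> \<epsilon> * pnorm (xs, ys) * pnorm ((x, f x) - (xbar, f xbar))"
proof (intro ballI, clarify)
  fix x ys xs
  assume x: "x \<in> cball xbar \<delta>" and "(ys, xs) \<in> coderiv_graph f x"
  then have "inner xs (x - xbar) = inner ys (f' x (x - xbar))"
    using limiting_normal_graph_annihilates_derivative[OF U_open _ deriv cont, of x xs "- ys"] ball_U
    by (auto simp: coderiv_graph_def)
  then have "\<bar>inner xs (x - xbar) - inner ys (f x - f xbar)\<bar>
      = \<bar>inner ys (f x - f xbar - f' x (x - xbar))\<bar>"
    by (simp add: inner_diff_right abs_minus_commute)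
  also have "\<dots> \<le> norm ys * norm (f x - f xbar - f' x (x - xbar))"
    by (rule Cauchy_Schwarz_ineq2)
  also have "\<dots> \<le> norm ys * (\<epsilon> * norm (x - xbar))"
    by (intro mult_left_mono est x) simp
  also have "\<dots> \<le> pnorm (xs, ys) * (\<epsilon> * pnorm ((x, f x) - (xbar, f xbar)))"
    using eps by (intro mult_mono mult_left_mono) (auto simp: pnorm_def le_max_iff_disj)
  finally show "\<bar>inner xs (x - xbar) - inner ys (f x - f xbar)\<bar>
      \<le> \<epsilon> * pnorm (xs, ys) * pnorm ((x, f x) - (xbar, f xbar))"
    by (simp add: algebra_simps)
qed

end
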